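(* Let $X_1,\dots,X_n$ be real random variables with $\mathbb{E}|X_i|<\infty$, let $N,M$ be positive integers with $n\le M$, let $L\ge 0$, $\delta>0$, $K>0$, and set $A=1+LM/N$. Assume that for all $1\le i<\ell\le n$, almost surely $|\mathbb{E}_i(X_\ell)-\mathbb{E}_{i-1}(X_\ell\mid X_i=0)|\le L|X_i|/N$, and that for all $1\le i\le n$, $\mathbb{E}(e^{\delta A|X_i|}\mid\mathcal F_{i-1})\le K$ almost surely. Define the Doob martingale differences \[ d_i=\mathbb{E}_i(X_i+\cdots+X_n)-\mathbb{E}_{i-1}(X_i+\cdots+X_n),\qquad i=1,\dots,n. \] Then for every $i$, $\mathbb{E}_{i-1}(d_i)=0$, $S_n-\mathbb{E}S_n=\sum_{i=1}^n d_i$, and almost surely $\mathbb{E}_{i-1}\big(e^{\delta|d_i|}\big)\le K^2$.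
   Context: $\mathcal F_i=\sigma(X_1,\dots,X_i)$ with $\mathcal F_0$ trivial, $\mathbb{E}_i(\cdot)=\mathbb{E}(\cdot\mid\mathcal F_i)$, and $S_n=X_1+\cdots+X_n$. For $i<\ell$, writing $\mathbb{E}_i(X_\ell)=h_{i,\ell}(X_1,\dots,X_i)$ with $h_{i,\ell}$ measurable, $\mathbb{E}_{i-1}(X_\ell\mid X_i=0):=h_{i,\ell}(X_1,\dots,X_{i-1},0)$. *)

theory Defs
  imports "HOL-Probability.Probability"
begin

text \<open>Natural filtration F_i = sigma(X_1,...,X_i); F_0 is trivial (index set empty).\<close>
definition nat_filtr :: "'a measure \<Rightarrow> (nat \<Rightarrow> 'a \<Rightarrow> real) \<Rightarrow> nat \<Rightarrow> 'a measure" where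
  "nat_filtr P X i =
     vimage_algebra (space P) (\<lambda>\<omega>. \<lambda>j\<in>{1..i}. X j \<omega>) (PiM {1..i} (\<lambda>_. (borel :: real measure)))"

definition doob_diff :: "'a measure \<Rightarrow> (nat \<Rightarrow> 'a \<Rightarrow> real) \<Rightarrow> nat \<Rightarrow> nat \<Rightarrow> 'a \<Rightarrow> real" where
  "doob_diff P X n i = (\<lambda>\<omega>.
      real_cond_exp P (nat_filtr P X i) (\<lambda>w. \<Sum>l\<in>{i..n}. X l w) \<omega>
    - real_cond_exp P (nat_filtr P X (i - 1)) (\<lambda>w. \<Sum>l\<in>{i..n}. X l w) \<omega>)"

end

theory Submission
  imports Defs
begin

text \<open>
  By the tower property each Doob difference d_i = E_i T - E_(i-1) T (T the tail sum) has vanishing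
  conditional mean, and since the head X_1 + ... + X_(i-1) is F_(i-1)-measurable, d_i is also the
  increment of the martingale E_k S_n, which telescopes from E S_n (F_0 is trivial) to S_n.

  For the tail bound write d_i as the sum over l >= i of E_i X_l - E_(i-1) X_l. The key observation
  is that if E_i Y is approximated within Z by an F_(i-1)-measurable g, then
  E_i Y - E_(i-1) Y = D - E_(i-1) D with D = E_i Y - g, so the increment is at most Z + E_(i-1) Z.
  For l > i the hypothesis provides g (set X_i = 0 in the representing function) with Z = L|X_i|/N;
  for l = i take g = 0 and Z = |X_i|. Summing at most M terms gives
  |d_i| <= A (|X_i| + E_(i-1)|X_i|). Finally exp(\<delta>|d_i|) <= exp(\<delta>A|X_i|) exp(\<delta>A E_(i-1)|X_i|),
  where the second factor is F_(i-1)-measurable and, by conditional Jensen, at most K, while the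
  first has conditional expectation at most K.
\<close>

context sigma_finite_subalgebra
begin

lemma real_cond_exp_abs_le:
  assumes "integrable M f"
  shows "AE x in M. \<bar>real_cond_exp M F f x\<bar> \<le> real_cond_exp M F (\<lambda>x. \<bar>f x\<bar>) x"
proof -
  have abs_int: "integrable M (\<lambda>x. \<bar>f x\<bar>)" using assms by auto
  have "AE x in M. real_cond_exp M F f x \<le> real_cond_exp M F (\<lambda>x. \<bar>f x\<bar>) x"
    by (rule real_cond_exp_mono) (auto simp: assms abs_int)
  moreover have "AE x in M. real_cond_exp M F (\<lambda>x. - f x) x \<le> real_cond_exp M F (\<lambda>x. \<bar>f x\<bar>) x"
    by (rule real_cond_exp_mono) (auto simp: assms abs_int)
  moreover have "AE x in M. real_cond_exp M F (\<lambda>x. (-1) * f x) x = (-1) * real_cond_exp M F f x"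
    by (rule real_cond_exp_cmult) (simp add: assms)
  ultimately show ?thesis by eventually_elim auto
qed

lemma real_cond_exp_eq_enn2real_nn_cond_exp:
  assumes [measurable]: "f \<in> borel_measurable M" and nonneg: "\<And>x. f x \<ge> 0"
  shows "AE x in M. real_cond_exp M F f x = enn2real (nn_cond_exp M F (\<lambda>x. ennreal (f x)) x)"
proof -
  have "(\<lambda>x. ennreal (- f x)) = (\<lambda>x. 0)" using nonneg by (simp add: ennreal_neg)
  moreover have "AE x in M. 0 = nn_cond_exp M F (\<lambda>x. 0) x"
    by (rule nn_cond_exp_F_meas) auto
  ultimately have "AE x in M. nn_cond_exp M F (\<lambda>x. ennreal (- f x)) x = 0"
    by simp
  then show ?thesis unfolding real_cond_exp_def by auto
qed

lemma real_cond_exp_sum_on: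
  fixes f :: "'b \<Rightarrow> 'a \<Rightarrow> real"
  assumes "\<And>i. i \<in> I \<Longrightarrow> integrable M (f i)"
  shows "AE x in M. real_cond_exp M F (\<lambda>x. \<Sum>i\<in>I. f i x) x = (\<Sum>i\<in>I. real_cond_exp M F (f i) x)"
proof -
  define g where "g i = (if i \<in> I then f i else (\<lambda>_. 0))" for i
  have "integrable M (g i)" for i using assms by (simp add: g_def)
  then have "AE x in M. real_cond_exp M F (\<lambda>x. \<Sum>i\<in>I. g i x) x = (\<Sum>i\<in>I. real_cond_exp M F (g i) x)"
    by (rule real_cond_exp_sum)
  moreover have "(\<lambda>x. \<Sum>i\<in>I. g i x) = (\<lambda>x. \<Sum>i\<in>I. f i x)" by (simp add: g_def)
  moreover have "(\<Sum>i\<in>I. real_cond_exp M F (g i) x) = (\<Sum>i\<in>I. real_cond_exp M F (f i) x)" for x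
    by (simp add: g_def)
  ultimately show ?thesis by simp
qed

lemma real_cond_exp_increment_cond_exp_zero:
  assumes "subalgebra M H" "subalgebra H F" "integrable M f"
  shows "AE x in M. real_cond_exp M F (\<lambda>x. real_cond_exp M H f x - real_cond_exp M F f x) x = 0"
proof -
  interpret H: sigma_finite_subalgebra M H by (rule nested_subalg_is_sigma_finite[OF assms(1,2)])
  have "AE x in M. real_cond_exp M F (\<lambda>x. real_cond_exp M H f x - real_cond_exp M F f x) x
      = real_cond_exp M F (real_cond_exp M H f) x - real_cond_exp M F (real_cond_exp M F f) x"
    by (rule real_cond_exp_diff) (simp_all add: assms H.real_cond_exp_int real_cond_exp_int)
  moreover have "AE x in M. real_cond_exp M F (real_cond_exp M H f) x = real_cond_exp M F f x"
    by (rule real_cond_exp_nested_subalg[OF assms])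
  moreover have "AE x in M. real_cond_exp M F (real_cond_exp M F f) x = real_cond_exp M F f x"
    by (rule real_cond_exp_F_meas) (simp_all add: assms real_cond_exp_int)
  ultimately show ?thesis by eventually_elim simp
qed

lemma real_cond_exp_increment_bound:
  assumes H: "subalgebra M H" "subalgebra H F"
    and f: "integrable M f" and Z: "integrable M Z"
    and g: "g \<in> borel_measurable F"
    and close: "AE x in M. \<bar>real_cond_exp M H f x - g x\<bar> \<le> Z x"
  shows "AE x in M. \<bar>real_cond_exp M H f x - real_cond_exp M F f x\<bar> \<le> Z x + real_cond_exp M F Z x"
proof -
  interpret H: sigma_finite_subalgebra M H by (rule nested_subalg_is_sigma_finite[OF H])
  define D where "D x = real_cond_exp M H f x - g x" for x
  have g_M [measurable]: "g \<in> borel_measurable M" by (rule measurable_from_subalg[OF subalg g])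
  have D_close: "AE x in M. \<bar>D x\<bar> \<le> Z x" using close by (simp add: D_def)
  have D_int: "integrable M D"
  proof (rule Bochner_Integration.integrable_bound[OF Z])
    show "D \<in> borel_measurable M" unfolding D_def by measurable
    show "AE x in M. norm (D x) \<le> norm (Z x)" using D_close by eventually_elim auto
  qed
  have g_int: "integrable M g"
  proof -
    have "g = (\<lambda>x. real_cond_exp M H f x - D x)" by (simp add: D_def)
    then show ?thesis using H.real_cond_exp_int(1)[OF f] D_int by simp
  qed
  have Hf_eq: "real_cond_exp M H f = (\<lambda>x. g x + D x)" by (simp add: D_def)
  have "AE x in M. real_cond_exp M F f x = g x + real_cond_exp M F D x"
  proof -
    have "AE x in M. real_cond_exp M F (real_cond_exp M H f) x = real_cond_exp M F f x"
      by (rule real_cond_exp_nested_subalg[OF H f])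
    moreover have "AE x in M. real_cond_exp M F (\<lambda>x. g x + D x) x
        = real_cond_exp M F g x + real_cond_exp M F D x"
      by (rule real_cond_exp_add[OF g_int D_int])
    moreover have "AE x in M. real_cond_exp M F g x = g x"
      by (rule real_cond_exp_F_meas[OF g_int g])
    ultimately show ?thesis unfolding Hf_eq by eventually_elim simp
  qed
  moreover have "AE x in M. \<bar>real_cond_exp M F D x\<bar> \<le> real_cond_exp M F (\<lambda>x. \<bar>D x\<bar>) x"
    by (rule real_cond_exp_abs_le[OF D_int])
  moreover have "AE x in M. real_cond_exp M F (\<lambda>x. \<bar>D x\<bar>) x \<le> real_cond_exp M F Z x"
    by (rule real_cond_exp_mono) (use D_close D_int Z in auto)
  ultimately show ?thesis using D_close
    by eventually_elim (auto simp: D_def)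
qed

end

context prob_space
begin

lemma real_cond_exp_trivial_subalgebra:
  assumes "subalgebra M F" "sets F = {{}, space M}" "integrable M f"
  shows "AE x in M. real_cond_exp M F f x = expectation f"
proof -
  interpret F: finite_measure_subalgebra M F by unfold_locales (rule assms(1))
  show ?thesis
  proof (rule F.real_cond_exp_charact)
    fix A assume "A \<in> sets F"
    then consider "A = {}" | "A = space M" using assms(2) by auto
    then show "(\<integral>x\<in>A. f x \<partial>M) = (\<integral>x\<in>A. expectation f \<partial>M)"
    proof cases
      case 1
      then show ?thesis by (simp add: set_lebesgue_integral_def)
    next
      case 2
      then show ?thesis by (simp add: set_integral_space assms(3) prob_space)
    qed
  qed (simp_all add: assms(3))
qed

lemma integrable_of_nn_cond_exp_le:
  assumes "subalgebra M F" and [measurable]: "f \<in> borel_measurable M" and nonneg: "\<And>x. f x \<ge> 0"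
    and bound: "AE x in M. nn_cond_exp M F (\<lambda>x. ennreal (f x)) x \<le> ennreal K"
  shows "integrable M f"
proof (rule integrableI_nonneg)
  interpret F: finite_measure_subalgebra M F by unfold_locales (rule assms(1))
  have "(\<integral>\<^sup>+ x. ennreal (f x) \<partial>M) = (\<integral>\<^sup>+ x. 1 * nn_cond_exp M F (\<lambda>x. ennreal (f x)) x \<partial>M)"
    by (subst F.nn_cond_exp_intg) simp_all
  also have "\<dots> \<le> (\<integral>\<^sup>+ x. ennreal K \<partial>M)"
    by (rule nn_integral_mono_AE) (use bound in simp)
  also have "\<dots> < \<infinity>" by (simp add: emeasure_space_1)
  finally show "(\<integral>\<^sup>+ x. ennreal (f x) \<partial>M) < \<infinity>" .
qed (use nonneg in simp_all)

lemma exp_real_cond_exp_abs_le: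
  fixes c K :: real
  assumes "subalgebra M F" "c \<ge> 0" "K \<ge> 0"
    and Y: "integrable M Y"
    and mgf: "AE x in M. nn_cond_exp M F (\<lambda>w. ennreal (exp (c * \<bar>Y w\<bar>))) x \<le> ennreal K"
  shows "AE x in M. exp (c * real_cond_exp M F (\<lambda>w. \<bar>Y w\<bar>) x) \<le> K"
proof -
  interpret F: finite_measure_subalgebra M F by unfold_locales (rule assms(1))
  have exp_int: "integrable M (\<lambda>w. exp (c * \<bar>Y w\<bar>))"
    by (rule integrable_of_nn_cond_exp_le[OF assms(1) _ _ mgf]) (use Y in simp_all)
  have abs_int: "integrable M (\<lambda>w. \<bar>Y w\<bar>)" using Y by simp
  have "AE x in M. exp (c * real_cond_exp M F (\<lambda>w. \<bar>Y w\<bar>) x)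
      \<le> real_cond_exp M F (\<lambda>w. exp (c * \<bar>Y w\<bar>)) x"
    by (rule F.real_cond_exp_jensens_inequality(2)[where I = UNIV, OF abs_int])
       (use exp_int convex_on_exp[OF \<open>c \<ge> 0\<close>] in auto)
  moreover have "AE x in M. real_cond_exp M F (\<lambda>w. exp (c * \<bar>Y w\<bar>)) x
      = enn2real (nn_cond_exp M F (\<lambda>w. ennreal (exp (c * \<bar>Y w\<bar>))) x)"
    by (rule F.real_cond_exp_eq_enn2real_nn_cond_exp) (use Y in simp_all)
  ultimately show ?thesis using mgf
    by eventually_elim (use \<open>K \<ge> 0\<close> enn2real_mono in \<open>fastforce\<close>)
qed

lemma nn_cond_exp_exp_abs_le_square:
  fixes \<delta> A K :: real
  assumes F: "subalgebra M F" and "\<delta> \<ge> 0" "A \<ge> 0" "K \<ge> 0"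
    and Y: "integrable M Y" and [measurable]: "d \<in> borel_measurable M"
    and bound: "AE x in M. \<bar>d x\<bar> \<le> A * (\<bar>Y x\<bar> + real_cond_exp M F (\<lambda>w. \<bar>Y w\<bar>) x)"
    and mgf: "AE x in M. nn_cond_exp M F (\<lambda>w. ennreal (exp (\<delta> * A * \<bar>Y w\<bar>))) x \<le> ennreal K"
  shows "AE x in M. nn_cond_exp M F (\<lambda>w. ennreal (exp (\<delta> * \<bar>d w\<bar>))) x \<le> ennreal (K ^ 2)"
proof -
  interpret F: finite_measure_subalgebra M F by unfold_locales (rule F)
  define c where "c = \<delta> * A"
  define V where "V = real_cond_exp M F (\<lambda>w. \<bar>Y w\<bar>)"
  define E where "E = (\<lambda>w. ennreal (exp (c * \<bar>Y w\<bar>)))"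
  have [measurable]: "Y \<in> borel_measurable M" using Y by simp
  have [measurable]: "V \<in> borel_measurable F" "V \<in> borel_measurable M" by (simp_all add: V_def)
  have [measurable]: "E \<in> borel_measurable M" unfolding E_def by measurable
  have "AE x in M. nn_cond_exp M F (\<lambda>w. ennreal (exp (\<delta> * \<bar>d w\<bar>))) x
      \<le> nn_cond_exp M F (\<lambda>w. ennreal (exp (c * V w)) * E w) x"
  proof (rule F.nn_cond_exp_mono)
    show "AE x in M. ennreal (exp (\<delta> * \<bar>d x\<bar>)) \<le> ennreal (exp (c * V x)) * E x"
      using bound
    proof eventually_elim
      case (elim x)
      have "\<delta> * \<bar>d x\<bar> \<le> c * V x + c * \<bar>Y x\<bar>"
        using mult_left_mono[OF elim \<open>\<delta> \<ge> 0\<close>] by (simp add: c_def V_def algebra_simps)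
      then show ?case by (simp add: E_def exp_add[symmetric] ennreal_mult[symmetric] ennreal_leI)
    qed
  qed measurable
  moreover have "AE x in M. ennreal (exp (c * V x)) * nn_cond_exp M F E x
      = nn_cond_exp M F (\<lambda>w. ennreal (exp (c * V w)) * E w) x"
    by (rule F.nn_cond_exp_prod) measurable
  moreover have "AE x in M. exp (c * V x) \<le> K"
    unfolding V_def c_def
    by (rule exp_real_cond_exp_abs_le[OF F _ \<open>K \<ge> 0\<close> Y mgf]) (use assms in simp)
  moreover note mgf
  ultimately show ?thesis
  proof eventually_elim
    case (elim x)
    have "nn_cond_exp M F (\<lambda>w. ennreal (exp (\<delta> * \<bar>d w\<bar>))) x
        \<le> ennreal (exp (c * V x)) * nn_cond_exp M F E x" using elim(1,2) by simp
    also have "\<dots> \<le> ennreal K * ennreal K"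
      by (rule mult_mono) (use elim(3,4) in \<open>simp_all add: E_def c_def ennreal_leI\<close>)
    also have "\<dots> = ennreal (K ^ 2)" using \<open>K \<ge> 0\<close> by (simp add: power2_eq_square ennreal_mult)
    finally show ?case .
  qed
qed

end

lemma space_nat_filtr [simp]: "space (nat_filtr P X i) = space P"
  by (simp add: nat_filtr_def)

lemma restrict_in_space_PiM_borel:
  "(\<lambda>\<omega>. \<lambda>j\<in>{1..i}. X j \<omega>) \<in> space P \<rightarrow> space (PiM {1..i} (\<lambda>_. borel :: real measure))"
  by (auto simp: space_PiM)

lemma X_measurable_nat_filtr:
  assumes "j \<in> {1..i}"
  shows "X j \<in> borel_measurable (nat_filtr P X i)"
proof -
  have "(\<lambda>\<omega>. \<lambda>j\<in>{1..i}. X j \<omega>) \<in> measurable (nat_filtr P X i) (PiM {1..i} (\<lambda>_. borel))"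
    unfolding nat_filtr_def by (rule measurable_vimage_algebra1[OF restrict_in_space_PiM_borel])
  from measurable_compose[OF this measurable_component_singleton[OF assms]] assms
  show ?thesis by simp
qed

lemma sets_nat_filtr_subset:
  assumes "\<And>j. j \<in> {1..i} \<Longrightarrow> X j \<in> borel_measurable N" and "space N = space P"
  shows "sets (nat_filtr P X i) \<subseteq> sets N"
  unfolding nat_filtr_def
proof (rule sets_image_in_sets)
  show "(\<lambda>\<omega>. \<lambda>j\<in>{1..i}. X j \<omega>) \<in> measurable N (PiM {1..i} (\<lambda>_. borel))"
    by (rule measurable_restrict) (rule assms(1))
qed (rule assms(2))

lemma subalgebra_nat_filtr:
  assumes "\<And>j. j \<in> {1..i} \<Longrightarrow> X j \<in> borel_measurable P"
  shows "subalgebra P (nat_filtr P X i)"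
  unfolding subalgebra_def using sets_nat_filtr_subset[OF assms] by simp

lemma subalgebra_nat_filtr_mono:
  assumes "i \<le> k"
  shows "subalgebra (nat_filtr P X k) (nat_filtr P X i)"
proof -
  have "sets (nat_filtr P X i) \<subseteq> sets (nat_filtr P X k)"
    by (rule sets_nat_filtr_subset) (use assms in \<open>auto intro: X_measurable_nat_filtr\<close>)
  then show ?thesis unfolding subalgebra_def by simp
qed

lemma sets_nat_filtr_0: "sets (nat_filtr P X 0) = {{}, space P}"
proof -
  have restrict_empty: "(\<lambda>j\<in>{}. X j \<omega>) = (\<lambda>_. undefined)" for \<omega>
    by (simp add: restrict_def)
  show ?thesis
    unfolding nat_filtr_def sets_vimage_algebra2[OF restrict_in_space_PiM_borel]
    by (auto simp: sets_PiM_empty restrict_empty)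
qed

locale integrable_process = prob_space P for P :: "'a measure" +
  fixes X :: "nat \<Rightarrow> 'a \<Rightarrow> real" and n :: nat
  assumes integrable_X: "\<And>i. i \<in> {1..n} \<Longrightarrow> integrable P (X i)"
begin

lemma subalgebra_nat_filtr_le: "i \<le> n \<Longrightarrow> subalgebra P (nat_filtr P X i)"
  by (intro subalgebra_nat_filtr borel_measurable_integrable integrable_X) auto

lemma finite_measure_subalgebra_nat_filtr: "i \<le> n \<Longrightarrow> finite_measure_subalgebra P (nat_filtr P X i)"
  by unfold_locales (rule subalgebra_nat_filtr_le)

lemma integrable_sum_X:
  assumes "I \<subseteq> {1..n}"
  shows "integrable P (\<lambda>w. \<Sum>l\<in>I. X l w)"
  using assms by (intro Bochner_Integration.integrable_sum integrable_X) auto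

lemma doob_diff_cond_exp_zero:
  assumes "i \<in> {1..n}"
  shows "AE \<omega> in P. real_cond_exp P (nat_filtr P X (i - 1)) (doob_diff P X n i) \<omega> = 0"
proof -
  interpret G: finite_measure_subalgebra P "nat_filtr P X (i - 1)"
    using assms by (intro finite_measure_subalgebra_nat_filtr) auto
  show ?thesis unfolding doob_diff_def
    by (rule G.real_cond_exp_increment_cond_exp_zero)
      (use assms in \<open>auto intro: subalgebra_nat_filtr_le subalgebra_nat_filtr_mono integrable_sum_X\<close>)
qed

lemma real_cond_exp_sum_X_split:
  assumes "1 \<le> i" "i - 1 \<le> k" "k \<le> n"
  shows "AE \<omega> in P. real_cond_exp P (nat_filtr P X k) (\<lambda>w. \<Sum>l\<in>{1..n}. X l w) \<omega>
     = (\<Sum>l\<in>{1..<i}. X l \<omega>) + real_cond_exp P (nat_filtr P X k) (\<lambda>w. \<Sum>l\<in>{i..n}. X l w) \<omega>"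
proof -
  interpret Fk: finite_measure_subalgebra P "nat_filtr P X k"
    using assms by (intro finite_measure_subalgebra_nat_filtr)
  have "{1..n} = {1..<i} \<union> {i..n}" using assms by auto
  then have split: "(\<lambda>w. \<Sum>l\<in>{1..n}. X l w) = (\<lambda>w. (\<Sum>l\<in>{1..<i}. X l w) + (\<Sum>l\<in>{i..n}. X l w))"
    by (intro ext) (simp, rule sum.union_disjoint, auto)
  have head_int: "integrable P (\<lambda>w. \<Sum>l\<in>{1..<i}. X l w)"
    by (rule integrable_sum_X) (use assms in auto)
  have "AE \<omega> in P. real_cond_exp P (nat_filtr P X k) (\<lambda>w. \<Sum>l\<in>{1..<i}. X l w) \<omega> = (\<Sum>l\<in>{1..<i}. X l \<omega>)"
    by (rule Fk.real_cond_exp_F_meas[OF head_int])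
      (use assms in \<open>auto intro!: borel_measurable_sum X_measurable_nat_filtr\<close>)
  moreover have "AE \<omega> in P. real_cond_exp P (nat_filtr P X k) (\<lambda>w. (\<Sum>l\<in>{1..<i}. X l w) + (\<Sum>l\<in>{i..n}. X l w)) \<omega>
      = real_cond_exp P (nat_filtr P X k) (\<lambda>w. \<Sum>l\<in>{1..<i}. X l w) \<omega>
        + real_cond_exp P (nat_filtr P X k) (\<lambda>w. \<Sum>l\<in>{i..n}. X l w) \<omega>"
    by (rule Fk.real_cond_exp_add[OF head_int integrable_sum_X]) (use assms in auto)
  ultimately show ?thesis unfolding split by eventually_elim simp
qed

lemma doob_diff_eq_cond_exp_increment:
  assumes "i \<in> {1..n}"
  shows "AE \<omega> in P. doob_diff P X n i \<omega>
     = real_cond_exp P (nat_filtr P X i) (\<lambda>w. \<Sum>l\<in>{1..n}. X l w) \<omega>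
       - real_cond_exp P (nat_filtr P X (i - 1)) (\<lambda>w. \<Sum>l\<in>{1..n}. X l w) \<omega>"
proof -
  have "AE \<omega> in P. real_cond_exp P (nat_filtr P X i) (\<lambda>w. \<Sum>l\<in>{1..n}. X l w) \<omega>
     = (\<Sum>l\<in>{1..<i}. X l \<omega>) + real_cond_exp P (nat_filtr P X i) (\<lambda>w. \<Sum>l\<in>{i..n}. X l w) \<omega>"
    by (rule real_cond_exp_sum_X_split) (use assms in auto)
  moreover have "AE \<omega> in P. real_cond_exp P (nat_filtr P X (i - 1)) (\<lambda>w. \<Sum>l\<in>{1..n}. X l w) \<omega>
     = (\<Sum>l\<in>{1..<i}. X l \<omega>) + real_cond_exp P (nat_filtr P X (i - 1)) (\<lambda>w. \<Sum>l\<in>{i..n}. X l w) \<omega>"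
    by (rule real_cond_exp_sum_X_split) (use assms in auto)
  ultimately show ?thesis by eventually_elim (simp add: doob_diff_def)
qed

lemma sum_doob_diff:
  "AE \<omega> in P. (\<Sum>i\<in>{1..n}. X i \<omega>) - (\<integral>w. (\<Sum>i\<in>{1..n}. X i w) \<partial>P)
     = (\<Sum>i\<in>{1..n}. doob_diff P X n i \<omega>)"
proof -
  define S where "S = (\<lambda>w. \<Sum>l\<in>{1..n}. X l w)"
  define E where "E k = real_cond_exp P (nat_filtr P X k) S" for k
  have S_int: "integrable P S" unfolding S_def by (rule integrable_sum_X) simp
  have "AE \<omega> in P. \<forall>i\<in>{1..n}. doob_diff P X n i \<omega> = E i \<omega> - E (i - 1) \<omega>"
    unfolding E_def S_def by (intro AE_finite_allI doob_diff_eq_cond_exp_increment) simp_all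
  moreover have "AE \<omega> in P. E n \<omega> = S \<omega>"
  proof -
    interpret Fn: finite_measure_subalgebra P "nat_filtr P X n"
      by (intro finite_measure_subalgebra_nat_filtr) simp
    show ?thesis unfolding E_def
      by (rule Fn.real_cond_exp_F_meas[OF S_int])
        (auto simp: S_def intro!: borel_measurable_sum X_measurable_nat_filtr)
  qed
  moreover have "AE \<omega> in P. E 0 \<omega> = expectation S"
    unfolding E_def
    by (rule real_cond_exp_trivial_subalgebra[OF subalgebra_nat_filtr_le sets_nat_filtr_0 S_int]) simp
  ultimately show ?thesis
  proof eventually_elim
    case (elim \<omega>)
    have "(\<Sum>i\<in>{1..n}. doob_diff P X n i \<omega>) = (\<Sum>i\<in>{Suc 0..n}. E i \<omega> - E (i - 1) \<omega>)"
      using elim(1) by simp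
    also have "\<dots> = E n \<omega> - E 0 \<omega>" by (rule sum_telescope'') simp
    finally show ?case using elim(2,3) by (simp add: S_def)
  qed
qed

lemma doob_diff_eq_sum_increments:
  assumes "i \<in> {1..n}"
  shows "AE \<omega> in P. doob_diff P X n i \<omega> = (\<Sum>l\<in>{i..n}.
     real_cond_exp P (nat_filtr P X i) (X l) \<omega> - real_cond_exp P (nat_filtr P X (i - 1)) (X l) \<omega>)"
proof -
  interpret G: finite_measure_subalgebra P "nat_filtr P X (i - 1)"
    using assms by (intro finite_measure_subalgebra_nat_filtr) auto
  interpret H: finite_measure_subalgebra P "nat_filtr P X i"
    using assms by (intro finite_measure_subalgebra_nat_filtr) auto
  have "AE \<omega> in P. real_cond_exp P (nat_filtr P X i) (\<lambda>w. \<Sum>l\<in>{i..n}. X l w) \<omega>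
      = (\<Sum>l\<in>{i..n}. real_cond_exp P (nat_filtr P X i) (X l) \<omega>)"
    by (rule H.real_cond_exp_sum_on) (use assms in \<open>auto intro: integrable_X\<close>)
  moreover have "AE \<omega> in P. real_cond_exp P (nat_filtr P X (i - 1)) (\<lambda>w. \<Sum>l\<in>{i..n}. X l w) \<omega>
      = (\<Sum>l\<in>{i..n}. real_cond_exp P (nat_filtr P X (i - 1)) (X l) \<omega>)"
    by (rule G.real_cond_exp_sum_on) (use assms in \<open>auto intro: integrable_X\<close>)
  ultimately show ?thesis by eventually_elim (simp add: doob_diff_def sum_subtractf)
qed

lemma cond_exp_increment_X_self_bound:
  assumes "i \<in> {1..n}"
  shows "AE \<omega> in P. \<bar>real_cond_exp P (nat_filtr P X i) (X i) \<omega> - real_cond_exp P (nat_filtr P X (i - 1)) (X i) \<omega>\<bar>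
     \<le> \<bar>X i \<omega>\<bar> + real_cond_exp P (nat_filtr P X (i - 1)) (\<lambda>w. \<bar>X i w\<bar>) \<omega>"
proof -
  interpret G: finite_measure_subalgebra P "nat_filtr P X (i - 1)"
    using assms by (intro finite_measure_subalgebra_nat_filtr) auto
  interpret H: finite_measure_subalgebra P "nat_filtr P X i"
    using assms by (intro finite_measure_subalgebra_nat_filtr) auto
  have X_int: "integrable P (X i)" using assms by (rule integrable_X)
  have "AE \<omega> in P. real_cond_exp P (nat_filtr P X i) (X i) \<omega> = X i \<omega>"
    by (rule H.real_cond_exp_F_meas[OF X_int]) (use assms in \<open>auto intro: X_measurable_nat_filtr\<close>)
  then have "AE \<omega> in P. \<bar>real_cond_exp P (nat_filtr P X i) (X i) \<omega> - 0\<bar> \<le> \<bar>X i \<omega>\<bar>"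
    by eventually_elim simp
  then show ?thesis
    by (intro G.real_cond_exp_increment_bound[where g = "\<lambda>_. 0"] X_int)
      (use assms X_int in \<open>auto intro: subalgebra_nat_filtr_le subalgebra_nat_filtr_mono\<close>)
qed

lemma cond_exp_increment_lipschitz_bound:
  fixes c :: real
  assumes "1 \<le> i" "i < l" "l \<le> n"
    and lip: "\<exists>h \<in> borel_measurable (PiM {1..i} (\<lambda>_. borel :: real measure)).
      (AE \<omega> in P. real_cond_exp P (nat_filtr P X i) (X l) \<omega> = h (\<lambda>j\<in>{1..i}. X j \<omega>)) \<and>
      (AE \<omega> in P. \<bar>h (\<lambda>j\<in>{1..i}. X j \<omega>) - h (\<lambda>j\<in>{1..i}. if j = i then 0 else X j \<omega>)\<bar>
                    \<le> c * \<bar>X i \<omega>\<bar>)"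
  shows "AE \<omega> in P. \<bar>real_cond_exp P (nat_filtr P X i) (X l) \<omega> - real_cond_exp P (nat_filtr P X (i - 1)) (X l) \<omega>\<bar>
     \<le> c * (\<bar>X i \<omega>\<bar> + real_cond_exp P (nat_filtr P X (i - 1)) (\<lambda>w. \<bar>X i w\<bar>) \<omega>)"
proof -
  interpret G: finite_measure_subalgebra P "nat_filtr P X (i - 1)"
    using assms by (intro finite_measure_subalgebra_nat_filtr) auto
  from lip obtain h where h: "h \<in> borel_measurable (PiM {1..i} (\<lambda>_. borel :: real measure))"
    and h_rep: "AE \<omega> in P. real_cond_exp P (nat_filtr P X i) (X l) \<omega> = h (\<lambda>j\<in>{1..i}. X j \<omega>)"
    and h_lip: "AE \<omega> in P. \<bar>h (\<lambda>j\<in>{1..i}. X j \<omega>) - h (\<lambda>j\<in>{1..i}. if j = i then 0 else X j \<omega>)\<bar>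
                  \<le> c * \<bar>X i \<omega>\<bar>"
    by blast
  have Xi_int: "integrable P (X i)" using assms by (intro integrable_X) auto
  have "(\<lambda>\<omega>. h (\<lambda>j\<in>{1..i}. if j = i then 0 else X j \<omega>)) \<in> borel_measurable (nat_filtr P X (i - 1))"
  proof (rule measurable_compose[OF measurable_restrict h])
    fix j assume "j \<in> {1..i}"
    then show "(\<lambda>\<omega>. if j = i then 0 else X j \<omega>) \<in> borel_measurable (nat_filtr P X (i - 1))"
      by (cases "j = i") (auto intro: X_measurable_nat_filtr)
  qed
  moreover have "AE \<omega> in P. \<bar>real_cond_exp P (nat_filtr P X i) (X l) \<omega>
      - h (\<lambda>j\<in>{1..i}. if j = i then 0 else X j \<omega>)\<bar> \<le> c * \<bar>X i \<omega>\<bar>"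
    using h_rep h_lip by eventually_elim simp
  ultimately have "AE \<omega> in P. \<bar>real_cond_exp P (nat_filtr P X i) (X l) \<omega> - real_cond_exp P (nat_filtr P X (i - 1)) (X l) \<omega>\<bar>
      \<le> c * \<bar>X i \<omega>\<bar> + real_cond_exp P (nat_filtr P X (i - 1)) (\<lambda>w. c * \<bar>X i w\<bar>) \<omega>"
    by (intro G.real_cond_exp_increment_bound)
      (use assms Xi_int in \<open>auto intro: subalgebra_nat_filtr_le subalgebra_nat_filtr_mono integrable_X\<close>)
  moreover have "AE \<omega> in P. real_cond_exp P (nat_filtr P X (i - 1)) (\<lambda>w. c * \<bar>X i w\<bar>) \<omega>
      = c * real_cond_exp P (nat_filtr P X (i - 1)) (\<lambda>w. \<bar>X i w\<bar>) \<omega>"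
    by (rule G.real_cond_exp_cmult) (use Xi_int in simp)
  ultimately show ?thesis by eventually_elim (simp add: distrib_left)
qed

lemma abs_doob_diff_le:
  fixes c :: real and m :: nat
  assumes i: "i \<in> {1..n}" and "n \<le> m" "c \<ge> 0"
    and incr: "\<And>l. i < l \<Longrightarrow> l \<le> n \<Longrightarrow> AE \<omega> in P.
       \<bar>real_cond_exp P (nat_filtr P X i) (X l) \<omega> - real_cond_exp P (nat_filtr P X (i - 1)) (X l) \<omega>\<bar>
         \<le> c * (\<bar>X i \<omega>\<bar> + real_cond_exp P (nat_filtr P X (i - 1)) (\<lambda>w. \<bar>X i w\<bar>) \<omega>)"
  shows "AE \<omega> in P. \<bar>doob_diff P X n i \<omega>\<bar>
     \<le> (1 + real m * c) * (\<bar>X i \<omega>\<bar> + real_cond_exp P (nat_filtr P X (i - 1)) (\<lambda>w. \<bar>X i w\<bar>) \<omega>)"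
proof -
  interpret G: finite_measure_subalgebra P "nat_filtr P X (i - 1)"
    using i by (intro finite_measure_subalgebra_nat_filtr) auto
  define B where "B \<omega> = \<bar>X i \<omega>\<bar> + real_cond_exp P (nat_filtr P X (i - 1)) (\<lambda>w. \<bar>X i w\<bar>) \<omega>" for \<omega>
  define t where "t l \<omega> = real_cond_exp P (nat_filtr P X i) (X l) \<omega>
    - real_cond_exp P (nat_filtr P X (i - 1)) (X l) \<omega>" for l \<omega>
  have "AE \<omega> in P. doob_diff P X n i \<omega> = t i \<omega> + (\<Sum>l\<in>{Suc i..n}. t l \<omega>)"
    using doob_diff_eq_sum_increments[OF i]
    by eventually_elim (use i in \<open>simp add: t_def sum.atLeast_Suc_atMost\<close>)
  moreover have "AE \<omega> in P. \<bar>t i \<omega>\<bar> \<le> B \<omega>"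
    unfolding t_def B_def by (rule cond_exp_increment_X_self_bound[OF i])
  moreover have "AE \<omega> in P. \<forall>l\<in>{Suc i..n}. \<bar>t l \<omega>\<bar> \<le> c * B \<omega>"
    unfolding t_def B_def by (intro AE_finite_allI incr) auto
  moreover have "AE \<omega> in P. 0 \<le> real_cond_exp P (nat_filtr P X (i - 1)) (\<lambda>w. \<bar>X i w\<bar>) \<omega>"
    by (rule G.real_cond_exp_pos) (use i integrable_X in auto)
  ultimately show ?thesis
  proof eventually_elim
    case (elim \<omega>)
    have cB_nonneg: "0 \<le> c * B \<omega>" using elim(4) \<open>c \<ge> 0\<close> by (simp add: B_def)
    have "\<bar>doob_diff P X n i \<omega>\<bar> \<le> \<bar>t i \<omega>\<bar> + (\<Sum>l\<in>{Suc i..n}. \<bar>t l \<omega>\<bar>)"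
      using elim(1) abs_triangle_ineq[of "t i \<omega>"] sum_abs[of "\<lambda>l. t l \<omega>" "{Suc i..n}"] by linarith
    also have "\<dots> \<le> B \<omega> + real (n - i) * (c * B \<omega>)"
      using elim(2) sum_bounded_above[of "{Suc i..n}" "\<lambda>l. \<bar>t l \<omega>\<bar>" "c * B \<omega>"] elim(3) by simp
    also have "\<dots> \<le> B \<omega> + real m * (c * B \<omega>)"
      using mult_right_mono[OF _ cB_nonneg, of "real (n - i)" "real m"] \<open>n \<le> m\<close> by simp
    finally show ?case by (simp add: B_def algebra_simps)
  qed
qed

end

theorem mainTheorem3:
  fixes P :: "'a measure" and X :: "nat \<Rightarrow> 'a \<Rightarrow> real"
    and n N M :: nat and L \<delta> K A :: real
  assumes "prob_space P"
    and rv: "\<And>i. i \<in> {1..n} \<Longrightarrow> X i \<in> borel_measurable P"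
    and int: "\<And>i. i \<in> {1..n} \<Longrightarrow> integrable P (X i)"
    and "N > 0" and "M > 0" and "n \<le> M"
    and "L \<ge> 0" and "\<delta> > 0" and "K > 0"
    and A_def: "A = 1 + L * real M / real N"
    and lip: "\<And>i l. 1 \<le> i \<Longrightarrow> i < l \<Longrightarrow> l \<le> n \<Longrightarrow>
       (\<exists>h \<in> borel_measurable (PiM {1..i} (\<lambda>_. (borel :: real measure))).
          (AE \<omega> in P. real_cond_exp P (nat_filtr P X i) (X l) \<omega> = h (\<lambda>j\<in>{1..i}. X j \<omega>)) \<and>
          (AE \<omega> in P. \<bar>h (\<lambda>j\<in>{1..i}. X j \<omega>) - h (\<lambda>j\<in>{1..i}. if j = i then 0 else X j \<omega>)\<bar>
                         \<le> L * \<bar>X i \<omega>\<bar> / real N))"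
    and expmom: "\<And>i. i \<in> {1..n} \<Longrightarrow>
       AE \<omega> in P. nn_cond_exp P (nat_filtr P X (i - 1)) (\<lambda>w. ennreal (exp (\<delta> * A * \<bar>X i w\<bar>))) \<omega>
                   \<le> ennreal K"
  shows "(\<forall>i\<in>{1..n}. AE \<omega> in P. real_cond_exp P (nat_filtr P X (i - 1)) (doob_diff P X n i) \<omega> = 0)
       \<and> (AE \<omega> in P. (\<Sum>i\<in>{1..n}. X i \<omega>) - (\<integral>w. (\<Sum>i\<in>{1..n}. X i w) \<partial>P)
                       = (\<Sum>i\<in>{1..n}. doob_diff P X n i \<omega>))
       \<and> (\<forall>i\<in>{1..n}. AE \<omega> in P.
             nn_cond_exp P (nat_filtr P X (i - 1)) (\<lambda>w. ennreal (exp (\<delta> * \<bar>doob_diff P X n i w\<bar>))) \<omega>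
               \<le> ennreal (K ^ 2))"
proof -
  interpret integrable_process P X n
    by (intro integrable_process.intro integrable_process_axioms.intro) (use assms in auto)
  show ?thesis
  proof (intro conjI ballI)
    fix i assume "i \<in> {1..n}"
    then show "AE \<omega> in P. real_cond_exp P (nat_filtr P X (i - 1)) (doob_diff P X n i) \<omega> = 0"
      by (rule doob_diff_cond_exp_zero)
  next
    show "AE \<omega> in P. (\<Sum>i\<in>{1..n}. X i \<omega>) - (\<integral>w. (\<Sum>i\<in>{1..n}. X i w) \<partial>P)
        = (\<Sum>i\<in>{1..n}. doob_diff P X n i \<omega>)"
      by (rule sum_doob_diff)
  next
    fix i assume i: "i \<in> {1..n}"
    have "AE \<omega> in P. \<bar>doob_diff P X n i \<omega>\<bar>
        \<le> (1 + real M * (L / real N)) * (\<bar>X i \<omega>\<bar> + real_cond_exp P (nat_filtr P X (i - 1)) (\<lambda>w. \<bar>X i w\<bar>) \<omega>)"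
      by (rule abs_doob_diff_le[OF i \<open>n \<le> M\<close>], use \<open>L \<ge> 0\<close> in simp,
          rule cond_exp_increment_lipschitz_bound, use i lip in auto)
    then have d_bound: "AE \<omega> in P. \<bar>doob_diff P X n i \<omega>\<bar>
        \<le> A * (\<bar>X i \<omega>\<bar> + real_cond_exp P (nat_filtr P X (i - 1)) (\<lambda>w. \<bar>X i w\<bar>) \<omega>)"
      by (simp add: A_def mult.commute)
    show "AE \<omega> in P. nn_cond_exp P (nat_filtr P X (i - 1)) (\<lambda>w. ennreal (exp (\<delta> * \<bar>doob_diff P X n i w\<bar>))) \<omega>
        \<le> ennreal (K ^ 2)"
      by (rule nn_cond_exp_exp_abs_le_square[OF subalgebra_nat_filtr_le _ _ _ integrable_X _ d_bound expmom[OF i]])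
        (use i \<open>\<delta> > 0\<close> \<open>K > 0\<close> \<open>L \<ge> 0\<close> in \<open>auto simp: A_def doob_diff_def\<close>)
  qed
qed

end
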